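(* Let $\mathfrak{H}$ be a Hilbert space and let $C$ be a quasi-sectorial contraction on $\mathfrak{H}$ with numerical range $W(C)\subseteq D_\alpha$ for some $0\le\alpha<\pi/2$. Let $K>0$ be a constant such that $\|C^n(\mathbb{1}-C)\|\le \frac{K}{n+1}$ for all $n\in\mathbb{N}$. Then \[ \left\|C^n-e^{n(C-\mathbb{1})}\right\|\le \frac{M}{n^{1/3}}, \qquad n=1,2,3,\dots, \] where $M=2K+2$.
   Context: $\mathbb{1}$ is the identity operator. The numerical range of a bounded operator $C$ is $W(C)=\{\langle Cu,u\rangle: u\in\mathfrak{H},\ \|u\|=1\}$. For $\alpha\in[0,\pi/2)$, $D_\alpha:=\{z\in\mathbb{C}:|z|\le\sin\alpha\}\cup\{z\in\mathbb{C}: |\arg(1-z)|\le\alpha \text{ and } |z-1|\le\cos\alpha\}$. A contraction $C$ (bounded, $\|C\|\le1$) on $\mathfrak{H}$ is called quasi-sectorial with semi-angle $\alpha$ (vertex at $z=1$) if $W(C)\subseteq D_\alpha$. (For such $C$ a constant $K$ with $\|C^n(\mathbb{1}-C)\|\le K/(n+1)$ for all $n$ is known to exist.) *)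

theory Defs
  imports "HOL-Analysis.Analysis"
begin

text \<open>Complex Hilbert spaces: a (real) Banach space carrying a complex scalar
multiplication and a complex inner product (linear in the first argument,
conjugate-linear in the second) that induces the norm.\<close>

class complex_hilbert = banach +
  fixes scaleC :: "complex \<Rightarrow> 'a \<Rightarrow> 'a"
    and cinner :: "'a \<Rightarrow> 'a \<Rightarrow> complex"
  assumes scaleC_of_real: "scaleC (complex_of_real r) x = scaleR r x"
    and scaleC_add_right: "scaleC c (x + y) = scaleC c x + scaleC c y"
    and scaleC_add_left: "scaleC (b + c) x = scaleC b x + scaleC c x"
    and scaleC_scaleC: "scaleC b (scaleC c x) = scaleC (b * c) x"
    and cinner_commute: "cinner x y = cnj (cinner y x)"
    and cinner_add_left: "cinner (x + y) z = cinner x z + cinner y z"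
    and cinner_scaleC_left: "cinner (scaleC c x) y = c * cinner x y"
    and cinner_ge_zero: "0 \<le> Re (cinner x x)"
    and cinner_eq_zero_iff: "cinner x x = 0 \<longleftrightarrow> x = 0"
    and norm_eq_sqrt_cinner: "norm x = sqrt (Re (cinner x x))"

text \<open>Bounded operators are elements of \<open>'a \<Rightarrow>L 'a\<close> (operator norm = \<open>norm\<close>)
that are in addition complex-linear.\<close>

definition complex_linear_op :: "('a::complex_hilbert \<Rightarrow>\<^sub>L 'a) \<Rightarrow> bool" where
  "complex_linear_op C \<longleftrightarrow> (\<forall>c x. blinfun_apply C (scaleC c x) = scaleC c (blinfun_apply C x))"

primrec op_pow :: "('a::real_normed_vector \<Rightarrow>\<^sub>L 'a) \<Rightarrow> nat \<Rightarrow> ('a \<Rightarrow>\<^sub>L 'a)" where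
  "op_pow A 0 = id_blinfun"
| "op_pow A (Suc n) = A o\<^sub>L op_pow A n"

definition op_exp :: "('a::banach \<Rightarrow>\<^sub>L 'a) \<Rightarrow> ('a \<Rightarrow>\<^sub>L 'a)" where
  "op_exp A = (\<Sum>k. (1 / fact k) *\<^sub>R op_pow A k)"

definition numerical_range :: "('a::complex_hilbert \<Rightarrow>\<^sub>L 'a) \<Rightarrow> complex set" where
  "numerical_range C = {cinner (blinfun_apply C u) u | u. norm u = 1}"

definition D_alpha :: "real \<Rightarrow> complex set" where
  "D_alpha \<alpha> = {z. cmod z \<le> sin \<alpha>} \<union> {z. \<bar>Arg (1 - z)\<bar> \<le> \<alpha> \<and> cmod (z - 1) \<le> cos \<alpha>}"

definition quasi_sectorial_contraction :: "real \<Rightarrow> ('a::complex_hilbert \<Rightarrow>\<^sub>L 'a) \<Rightarrow> bool" where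
  "quasi_sectorial_contraction \<alpha> C \<longleftrightarrow>
     complex_linear_op C \<and> norm C \<le> 1 \<and> numerical_range C \<subseteq> D_alpha \<alpha>"

end

theory Submission
  imports Defs
begin

text \<open>Since e^(n(C - 1)) = e^(-n) e^(nC), the exponential is the Poisson average
  \<Sum>_k p_k C^k with weights p_k = e^(-n) n^k/k! of mean and variance n; hence
  C^n - e^(n(C - 1)) = \<Sum>_k p_k (C^n - C^k). Telescoping the Ritt condition
  \<parallel>C^j (1 - C)\<parallel> \<le> K/(j + 1) gives \<parallel>C^n - C^k\<parallel> \<le> 2K/x whenever |k - n| \<le> x^2, where
  x = n^(1/3); for the other k the trivial bound 2 is at most 2(k - n)^2/x^4. Averaging against
  the weights, the variance turns the second term into 2n/x^4 = 2/x.\<close>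

lemma blinfun_compose_assoc: "(A o\<^sub>L B) o\<^sub>L C = A o\<^sub>L (B o\<^sub>L C)"
  by (rule blinfun_eqI) simp

lemma blinfun_compose_id [simp]: "id_blinfun o\<^sub>L A = A" "A o\<^sub>L id_blinfun = A"
  by (auto intro: blinfun_eqI)

lemmas blinfun_compose_add_left = bounded_bilinear.add_left[OF bounded_bilinear_blinfun_compose]
lemmas blinfun_compose_diff_right = bounded_bilinear.diff_right[OF bounded_bilinear_blinfun_compose]
lemmas blinfun_compose_sum_right = bounded_bilinear.sum_right[OF bounded_bilinear_blinfun_compose]

lemma blinfun_compose_scaleR [simp]:
  "A o\<^sub>L (c *\<^sub>R B) = c *\<^sub>R (A o\<^sub>L B)" "(c *\<^sub>R A) o\<^sub>L B = c *\<^sub>R (A o\<^sub>L B)"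
  by (auto intro!: blinfun_eqI simp: blinfun.bilinear_simps)

lemma op_pow_Suc_right: "op_pow A (Suc n) = op_pow A n o\<^sub>L A"
  by (induction n) (simp_all add: blinfun_compose_assoc[symmetric])

lemma norm_op_pow_le: "norm (op_pow A n) \<le> norm A ^ n"
proof (induction n)
  case 0
  show ?case by (simp add: norm_blinfun_id_le)
next
  case (Suc n)
  have "norm (op_pow A (Suc n)) \<le> norm A * norm (op_pow A n)"
    by (simp add: norm_blinfun_compose)
  also have "\<dots> \<le> norm A * norm A ^ n"
    using Suc by (simp add: mult_left_mono)
  finally show ?case by simp
qed

lemma op_pow_scaleR: "op_pow (c *\<^sub>R A) n = c ^ n *\<^sub>R op_pow A n"
  by (induction n) simp_all

lemma bounded_bilinear_Cauchy_product_sums: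
  fixes a :: "nat \<Rightarrow> 'a::banach" and b :: "nat \<Rightarrow> 'b::banach"
    and prod :: "'a \<Rightarrow> 'b \<Rightarrow> 'c::real_normed_vector"
  assumes "bounded_bilinear prod"
    and a: "summable (\<lambda>k. norm (a k))" and b: "summable (\<lambda>k. norm (b k))"
  shows "(\<lambda>k. \<Sum>i\<le>k. prod (a i) (b (k - i))) sums prod (\<Sum>k. a k) (\<Sum>k. b k)"
proof -
  txt \<open>The gap between the square and the triangle of index pairs is controlled by the same gap
    for the real series of norms, which the scalar Cauchy product formula closes.\<close>
  interpret bounded_bilinear prod by fact
  obtain K where "K \<ge> 0" and K: "\<And>x y. norm (prod x y) \<le> norm x * norm y * K"
    using nonneg_bounded by blast
  let ?square = "\<lambda>n::nat. {..<n} \<times> {..<n}"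
  let ?triangle = "\<lambda>n::nat. {(i, j). i + j < n}"
  let ?g = "\<lambda>(i, j). prod (a i) (b j)"
  let ?f = "\<lambda>(i, j). norm (a i) * norm (b j)"
  have triangle_sub: "?triangle n \<subseteq> ?square n" for n by auto
  have "(\<lambda>n. prod (\<Sum>i<n. a i) (\<Sum>j<n. b j)) \<longlonglongrightarrow> prod (\<Sum>k. a k) (\<Sum>k. b k)"
    by (intro tendsto summable_LIMSEQ summable_norm_cancel[OF a] summable_norm_cancel[OF b])
  then have g_square: "(\<lambda>n. sum ?g (?square n)) \<longlonglongrightarrow> prod (\<Sum>k. a k) (\<Sum>k. b k)"
    unfolding sum_left by (simp add: sum_right sum.cartesian_product)
  have "(\<lambda>n. (\<Sum>i<n. norm (a i)) * (\<Sum>j<n. norm (b j))) \<longlonglongrightarrow> (\<Sum>k. norm (a k)) * (\<Sum>k. norm (b k))"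
    by (intro tendsto_mult summable_LIMSEQ a b)
  then have f_square: "(\<lambda>n. sum ?f (?square n)) \<longlonglongrightarrow> (\<Sum>k. norm (a k)) * (\<Sum>k. norm (b k))"
    by (simp add: sum_product sum.cartesian_product)
  have "(\<lambda>k. \<Sum>i\<le>k. norm (a i) * norm (b (k - i))) sums ((\<Sum>k. norm (a k)) * (\<Sum>k. norm (b k)))"
    using Cauchy_product_sums[of "\<lambda>k. norm (a k)" "\<lambda>k. norm (b k)"] a b by simp
  then have f_triangle: "(\<lambda>n. sum ?f (?triangle n)) \<longlonglongrightarrow> (\<Sum>k. norm (a k)) * (\<Sum>k. norm (b k))"
    by (simp add: sums_def sum.triangle_reindex)
  have f_gap: "(\<lambda>n. sum ?f (?square n) - sum ?f (?triangle n)) \<longlonglongrightarrow> 0"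
    using tendsto_diff[OF f_square f_triangle] by simp
  have g_gap_le: "norm (sum ?g (?square n) - sum ?g (?triangle n))
      \<le> norm (sum ?f (?square n) - sum ?f (?triangle n)) * K" for n
  proof -
    have "finite (?square n)" by simp
    then have diff: "sum h (?square n) - sum h (?triangle n) = sum h (?square n - ?triangle n)"
      for h :: "nat \<times> nat \<Rightarrow> 'z::ab_group_add"
      by (simp add: sum_diff triangle_sub)
    have "norm (sum ?g (?square n - ?triangle n)) \<le> (\<Sum>x\<in>?square n - ?triangle n. ?f x * K)"
      by (rule order_trans[OF norm_sum sum_mono]) (clarsimp simp: K)
    also have "\<dots> = sum ?f (?square n - ?triangle n) * K"
      by (rule sum_distrib_right[symmetric])
    also have "\<dots> \<le> norm (sum ?f (?square n - ?triangle n)) * K"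
      using \<open>K \<ge> 0\<close> by (intro mult_right_mono) simp_all
    finally show ?thesis
      by (simp only: diff)
  qed
  have "(\<lambda>n. sum ?g (?square n) - sum ?g (?triangle n)) \<longlonglongrightarrow> 0"
    by (rule tendsto_0_le[OF f_gap always_eventually]) (use g_gap_le in blast)
  with g_square have "(\<lambda>n. sum ?g (?triangle n)) \<longlonglongrightarrow> prod (\<Sum>k. a k) (\<Sum>k. b k)"
    by (rule Lim_transform2)
  then show ?thesis
    by (simp only: sums_def sum.triangle_reindex)
qed

definition exp_term :: "('a::real_normed_vector \<Rightarrow>\<^sub>L 'a) \<Rightarrow> nat \<Rightarrow> ('a \<Rightarrow>\<^sub>L 'a)" where
  "exp_term A n = (1 / fact n) *\<^sub>R op_pow A n"

lemma op_exp_eq_suminf_exp_term: "op_exp A = (\<Sum>n. exp_term A n)"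
  by (simp add: op_exp_def exp_term_def)

lemma blinfun_compose_exp_term: "A o\<^sub>L exp_term A n = real (Suc n) *\<^sub>R exp_term A (Suc n)"
proof -
  have "real (Suc n) * (1 / fact (Suc n)) = 1 / fact n"
    by (simp add: fact_Suc del: of_nat_Suc)
  then show ?thesis
    by (simp add: exp_term_def del: of_nat_Suc)
qed

lemma summable_norm_exp_term: "summable (\<lambda>n. norm (exp_term (A::'a::banach \<Rightarrow>\<^sub>L 'a) n))"
proof (rule summable_comparison_test[OF _ summable_exp_generic[of "norm A"]])
  show "\<exists>N. \<forall>n\<ge>N. norm (norm (exp_term A n)) \<le> norm A ^ n /\<^sub>R fact n"
    using norm_op_pow_le[of A] by (auto simp: exp_term_def divide_simps)
qed

text \<open>The binomial theorem for \<open>A\<close> and the commuting operator \<open>c \<one>\<close>, divided by \<open>n!\<close>.\<close>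

lemma exp_term_add_scaleR_id:
  fixes A :: "'a::real_normed_vector \<Rightarrow>\<^sub>L 'a" and c :: real
  defines "s \<equiv> \<lambda>j. c ^ j / fact j"
  shows "exp_term (A + c *\<^sub>R id_blinfun) n = (\<Sum>i\<le>n. s (n - i) *\<^sub>R exp_term A i)"
proof (induction n)
  case 0
  show ?case by (simp add: exp_term_def s_def)
next
  case (Suc n)
  let ?t = "\<lambda>i. s (Suc n - i) *\<^sub>R exp_term A i"
  have s_Suc: "c * s (n - i) = real (Suc n - i) * s (Suc n - i)" if "i \<le> n" for i
    using that by (simp add: s_def Suc_diff_le divide_simps)
  have "real (Suc n) *\<^sub>R exp_term (A + c *\<^sub>R id_blinfun) (Suc n)
      = (A + c *\<^sub>R id_blinfun) o\<^sub>L (\<Sum>i\<le>n. s (n - i) *\<^sub>R exp_term A i)"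
    by (subst Suc.IH[symmetric]) (rule blinfun_compose_exp_term[symmetric])
  also have "\<dots> = (\<Sum>i\<le>n. s (n - i) *\<^sub>R (A o\<^sub>L exp_term A i)) + (\<Sum>i\<le>n. (c * s (n - i)) *\<^sub>R exp_term A i)"
    by (simp add: blinfun_compose_add_left blinfun_compose_sum_right scaleR_add_right sum.distrib mult.commute)
  also have "\<dots> = (\<Sum>i\<le>n. real (Suc i) *\<^sub>R ?t (Suc i)) + (\<Sum>i\<le>n. real (Suc n - i) *\<^sub>R ?t i)"
    by (simp add: blinfun_compose_exp_term s_Suc mult.commute)
  also have "(\<Sum>i\<le>n. real (Suc i) *\<^sub>R ?t (Suc i)) = (\<Sum>i\<le>Suc n. real i *\<^sub>R ?t i)"
    by (subst sum.atMost_Suc_shift) simp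
  also have "(\<Sum>i\<le>n. real (Suc n - i) *\<^sub>R ?t i) = (\<Sum>i\<le>Suc n. real (Suc n - i) *\<^sub>R ?t i)"
    by simp
  also have "(\<Sum>i\<le>Suc n. real i *\<^sub>R ?t i) + (\<Sum>i\<le>Suc n. real (Suc n - i) *\<^sub>R ?t i)
      = (\<Sum>i\<le>Suc n. real (Suc n) *\<^sub>R ?t i)"
    unfolding sum.distrib[symmetric]
    by (intro sum.cong refl, subst scaleR_add_left[symmetric]) (simp add: of_nat_diff)
  also have "\<dots> = real (Suc n) *\<^sub>R (\<Sum>i\<le>Suc n. ?t i)"
    by (simp only: scaleR_right.sum)
  finally show ?case
    by (simp del: sum.atMost_Suc of_nat_Suc)
qed

lemma op_exp_add_scaleR_id:
  fixes A :: "'a::banach \<Rightarrow>\<^sub>L 'a"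
  shows "op_exp (A + c *\<^sub>R id_blinfun) = exp c *\<^sub>R op_exp A"
proof -
  have "summable (\<lambda>j. norm (c ^ j / fact j))"
    using summable_exp_generic[of "\<bar>c\<bar>"] by (simp add: abs_mult power_abs divide_inverse mult.commute)
  then have "(\<lambda>n. \<Sum>i\<le>n. (c ^ (n - i) / fact (n - i)) *\<^sub>R exp_term A i)
      sums ((\<Sum>j. c ^ j / fact j) *\<^sub>R (\<Sum>n. exp_term A n))"
    by (rule bounded_bilinear_Cauchy_product_sums[OF bounded_bilinear.flip[OF bounded_bilinear_scaleR]
          summable_norm_exp_term])
  moreover have "(\<Sum>j. c ^ j / fact j) = exp c"
    using exp_converges[of c] by (simp add: sums_iff divide_inverse mult.commute)
  ultimately show ?thesis
    by (simp add: op_exp_eq_suminf_exp_term exp_term_add_scaleR_id sums_iff)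
qed

definition poisson_weight :: "real \<Rightarrow> nat \<Rightarrow> real" where
  "poisson_weight N k = exp (-N) * (N ^ k / fact k)"

lemma exp_series_sums: "(\<lambda>k. N ^ k / fact k) sums exp (N::real)"
  using exp_converges[of N] by (simp add: divide_inverse mult.commute)

lemma exp_series_Suc: "real (Suc k) * (N ^ Suc k / fact (Suc k)) = N * (N ^ k / fact k)"
  by (simp add: fact_Suc divide_simps del: of_nat_Suc)

lemma exp_series_moment1_sums: "(\<lambda>k. real k * (N ^ k / fact k)) sums (N * exp (N::real))"
proof -
  have "(\<lambda>k. real (Suc k) * (N ^ Suc k / fact (Suc k))) sums (N * exp N)"
    unfolding exp_series_Suc by (rule sums_mult[OF exp_series_sums])
  then show ?thesis
    by (subst (asm) sums_Suc_iff) simp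
qed

lemma exp_series_moment2_sums: "(\<lambda>k. real k ^ 2 * (N ^ k / fact k)) sums ((N ^ 2 + N) * exp (N::real))"
proof -
  have "real (Suc k) ^ 2 * (N ^ Suc k / fact (Suc k)) = N * (real k * (N ^ k / fact k) + N ^ k / fact k)" for k
  proof -
    have "real (Suc k) ^ 2 * (N ^ Suc k / fact (Suc k)) = real (Suc k) * (N * (N ^ k / fact k))"
      by (simp only: power2_eq_square mult.assoc exp_series_Suc)
    then show ?thesis
      by (simp add: algebra_simps add_divide_distrib)
  qed
  moreover have "(\<lambda>k. N * (real k * (N ^ k / fact k) + N ^ k / fact k)) sums (N * (N * exp N + exp N))"
    by (intro sums_mult sums_add exp_series_moment1_sums exp_series_sums)
  ultimately have "(\<lambda>k. real (Suc k) ^ 2 * (N ^ Suc k / fact (Suc k))) sums (N * (N * exp N + exp N))"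
    by simp
  then show ?thesis
    by (subst (asm) sums_Suc_iff) (simp add: algebra_simps power2_eq_square)
qed

lemma poisson_weight_sums: "poisson_weight N sums 1"
  unfolding poisson_weight_def
  using sums_mult[OF exp_series_sums, of "exp (-N)" N] exp_minus_inverse[of N]
  by (simp add: mult.commute)

lemma poisson_weight_variance_sums: "(\<lambda>k. poisson_weight N k * (real k - N) ^ 2) sums N"
proof -
  have "(\<lambda>k. exp (-N) * (real k ^ 2 * (N ^ k / fact k)) - (2 * N * exp (-N)) * (real k * (N ^ k / fact k))
         + (N ^ 2 * exp (-N)) * (N ^ k / fact k))
      sums (exp (-N) * ((N ^ 2 + N) * exp N) - (2 * N * exp (-N)) * (N * exp N) + (N ^ 2 * exp (-N)) * exp N)"
    by (intro sums_add sums_diff sums_mult exp_series_sums exp_series_moment1_sums exp_series_moment2_sums)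
  moreover have "exp (-N) * ((N ^ 2 + N) * exp N) - (2 * N * exp (-N)) * (N * exp N)
      + (N ^ 2 * exp (-N)) * exp N = N"
    using exp_minus_inverse[of N] by (simp add: algebra_simps power2_eq_square)
  moreover have "poisson_weight N k * (real k - N) ^ 2 = exp (-N) * (real k ^ 2 * (N ^ k / fact k))
      - (2 * N * exp (-N)) * (real k * (N ^ k / fact k)) + (N ^ 2 * exp (-N)) * (N ^ k / fact k)" for k
    by (simp add: poisson_weight_def field_simps power2_eq_square)
  ultimately show ?thesis
    by simp
qed

lemma op_pow_poisson_sums_op_exp:
  fixes C :: "'a::banach \<Rightarrow>\<^sub>L 'a"
  shows "(\<lambda>k. poisson_weight N k *\<^sub>R op_pow C k) sums op_exp (N *\<^sub>R (C - id_blinfun))"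
proof -
  have "exp_term (N *\<^sub>R C) sums op_exp (N *\<^sub>R C)"
    unfolding op_exp_eq_suminf_exp_term
    by (rule summable_sums[OF summable_norm_cancel[OF summable_norm_exp_term]])
  then have "(\<lambda>k. exp (-N) *\<^sub>R exp_term (N *\<^sub>R C) k) sums (exp (-N) *\<^sub>R op_exp (N *\<^sub>R C))"
    by (rule sums_scaleR_right)
  moreover have "N *\<^sub>R (C - id_blinfun) = N *\<^sub>R C + (-N) *\<^sub>R id_blinfun"
    by (simp add: scaleR_diff_right)
  ultimately show ?thesis
    by (simp only: op_exp_add_scaleR_id) (simp add: exp_term_def op_pow_scaleR poisson_weight_def)
qed

lemma norm_op_pow_le_one: "norm A \<le> 1 \<Longrightarrow> norm (op_pow A n) \<le> 1"
  using norm_op_pow_le[of A n] by (meson norm_ge_zero order_trans power_le_one)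

lemma Ritt_constant_nonneg:
  assumes "\<And>n. norm (op_pow C n o\<^sub>L (id_blinfun - C)) \<le> K / (real n + 1)"
  shows "0 \<le> K"
  using order_trans[OF norm_ge_zero assms[of 0]] by simp

lemma norm_op_pow_sub_op_pow_le:
  fixes C :: "'a::real_normed_vector \<Rightarrow>\<^sub>L 'a"
  assumes ritt: "\<And>n. norm (op_pow C n o\<^sub>L (id_blinfun - C)) \<le> K / (real n + 1)"
    and "k \<le> m"
  shows "norm (op_pow C k - op_pow C m) \<le> K * (real m - real k) / (real k + 1)"
  using \<open>k \<le> m\<close>
proof (induction m rule: dec_induct)
  case base
  show ?case by simp
next
  case (step m)
  have "0 \<le> K"
    using ritt by (rule Ritt_constant_nonneg)
  have "norm (op_pow C m - op_pow C (Suc m)) \<le> K / (real k + 1)"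
  proof -
    have "op_pow C m - op_pow C (Suc m) = op_pow C m o\<^sub>L (id_blinfun - C)"
      by (simp only: op_pow_Suc_right blinfun_compose_diff_right blinfun_compose_id)
    moreover have "K / (real m + 1) \<le> K / (real k + 1)"
      using \<open>0 \<le> K\<close> step.hyps by (intro divide_left_mono) auto
    ultimately show ?thesis
      using ritt[of m] by simp
  qed
  moreover have "norm (op_pow C k - op_pow C (Suc m))
      \<le> norm (op_pow C k - op_pow C m) + norm (op_pow C m - op_pow C (Suc m))"
    using norm_triangle_ineq[of "op_pow C k - op_pow C m" "op_pow C m - op_pow C (Suc m)"] by simp
  ultimately have "norm (op_pow C k - op_pow C (Suc m))
      \<le> K * (real m - real k) / (real k + 1) + K / (real k + 1)"
    using step.IH by linarith
  also have "\<dots> = K * (real (Suc m) - real k) / (real k + 1)"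
    by (simp add: add_divide_distrib[symmetric] algebra_simps)
  finally show ?case .
qed

lemma norm_op_pow_sub_op_pow_le_min:
  fixes C :: "'a::real_normed_vector \<Rightarrow>\<^sub>L 'a"
  assumes "\<And>n. norm (op_pow C n o\<^sub>L (id_blinfun - C)) \<le> K / (real n + 1)"
  shows "norm (op_pow C k - op_pow C m) \<le> K * \<bar>real k - real m\<bar> / (real (min k m) + 1)"
proof (cases "k \<le> m")
  case True
  then show ?thesis
    using norm_op_pow_sub_op_pow_le[OF assms True] by simp
next
  case False
  then show ?thesis
    using norm_op_pow_sub_op_pow_le[OF assms, of m k] by (simp add: norm_minus_commute)
qed

lemma cube_gap_ratio_le:
  fixes x d j :: real
  assumes "1 \<le> x" and "0 \<le> d" and "d \<le> x ^ 2" and "0 \<le> j" and "x ^ 3 \<le> j + d"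
  shows "d / (j + 1) \<le> 2 / x"
proof -
  have "0 \<le> (x - 4/3) ^ 2 * (x + 2/3)"
    using \<open>1 \<le> x\<close> by simp
  also have "\<dots> = x ^ 3 - 2 * x ^ 2 + 32/27"
    by (simp add: power2_eq_square power3_eq_cube field_simps)
  finally have cubic: "x ^ 3 \<le> 2 * x ^ 3 - 2 * x ^ 2 + 2"
    by (simp add: algebra_simps)
  have "d * x \<le> x ^ 2 * x"
    using assms by (intro mult_right_mono) auto
  also have "\<dots> = x ^ 3"
    by (simp add: power2_eq_square power3_eq_cube)
  also have "\<dots> \<le> 2 * j + 2"
    using cubic assms by linarith
  finally show ?thesis
    using assms by (simp add: field_simps)
qed

lemma norm_op_pow_sub_op_pow_le_quadratic:
  fixes C :: "'a::real_normed_vector \<Rightarrow>\<^sub>L 'a"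
  assumes "norm C \<le> 1"
    and ritt: "\<And>n. norm (op_pow C n o\<^sub>L (id_blinfun - C)) \<le> K / (real n + 1)"
    and "1 \<le> x" and "x ^ 3 = real n"
  shows "norm (op_pow C n - op_pow C k) \<le> 2 * K / x + 2 * (real k - real n) ^ 2 / x ^ 4"
proof (cases "\<bar>real k - real n\<bar> \<le> x ^ 2")
  case True
  have "0 \<le> K"
    using ritt by (rule Ritt_constant_nonneg)
  have "norm (op_pow C n - op_pow C k) \<le> K * (\<bar>real n - real k\<bar> / (real (min n k) + 1))"
    using norm_op_pow_sub_op_pow_le_min[OF ritt] by simp
  also have "\<dots> \<le> K * (2 / x)"
    using True \<open>1 \<le> x\<close> \<open>x ^ 3 = real n\<close> \<open>0 \<le> K\<close>
    by (intro mult_left_mono cube_gap_ratio_le) (auto simp: abs_minus_commute)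
  also have "\<dots> \<le> 2 * K / x + 2 * (real k - real n) ^ 2 / x ^ 4"
    by (rule add_increasing2) (use \<open>1 \<le> x\<close> in \<open>simp_all add: ac_simps\<close>)
  finally show ?thesis .
next
  case False
  have "x ^ 4 = (x ^ 2) ^ 2"
    by simp
  also have "\<dots> \<le> \<bar>real k - real n\<bar> ^ 2"
    using False by (intro power_mono) auto
  also have "\<dots> = (real k - real n) ^ 2"
    by simp
  finally have "2 \<le> 2 * (real k - real n) ^ 2 / x ^ 4"
    using \<open>1 \<le> x\<close> by (simp add: le_divide_eq)
  moreover have "norm (op_pow C n - op_pow C k) \<le> 2"
    using norm_op_pow_le_one[OF \<open>norm C \<le> 1\<close>, of n] norm_op_pow_le_one[OF \<open>norm C \<le> 1\<close>, of k]
      norm_triangle_ineq4[of "op_pow C n" "op_pow C k"]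
    by linarith
  moreover have "0 \<le> 2 * K / x"
    using Ritt_constant_nonneg[OF ritt] \<open>1 \<le> x\<close> by simp
  ultimately show ?thesis
    by linarith
qed

lemma norm_op_pow_sub_op_exp_le:
  fixes C :: "'a::banach \<Rightarrow>\<^sub>L 'a"
  assumes "norm C \<le> 1"
    and ritt: "\<And>n. norm (op_pow C n o\<^sub>L (id_blinfun - C)) \<le> K / (real n + 1)"
    and "1 \<le> n"
  shows "norm (op_pow C n - op_exp (real n *\<^sub>R (C - id_blinfun))) \<le> (2 * K + 2) / real n powr (1 / 3)"
proof -
  define x where "x = real n powr (1 / 3)"
  define p where "p = poisson_weight (real n)"
  have "1 \<le> x"
    using \<open>1 \<le> n\<close> by (simp add: x_def ge_one_powr_ge_zero)
  have "x ^ 3 = real n"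
    using \<open>1 \<le> n\<close> by (simp add: x_def powr_powr flip: powr_realpow)
  have weighted: "(\<lambda>k. p k *\<^sub>R (op_pow C n - op_pow C k))
      sums (op_pow C n - op_exp (real n *\<^sub>R (C - id_blinfun)))"
    using sums_diff[OF sums_scaleR_left[OF poisson_weight_sums] op_pow_poisson_sums_op_exp]
    by (simp add: p_def scaleR_diff_right)
  have majorant: "(\<lambda>k. (2 * K / x) * p k + (2 / x ^ 4) * (p k * (real k - real n) ^ 2))
      sums ((2 * K / x) * 1 + (2 / x ^ 4) * real n)"
    unfolding p_def by (intro sums_add sums_mult poisson_weight_sums poisson_weight_variance_sums)
  have bound: "norm (p k *\<^sub>R (op_pow C n - op_pow C k))
      \<le> (2 * K / x) * p k + (2 / x ^ 4) * (p k * (real k - real n) ^ 2)" for k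
  proof -
    have "0 \<le> p k"
      by (simp add: p_def poisson_weight_def)
    then have "norm (p k *\<^sub>R (op_pow C n - op_pow C k)) = p k * norm (op_pow C n - op_pow C k)"
      by simp
    also have "\<dots> \<le> p k * (2 * K / x + 2 * (real k - real n) ^ 2 / x ^ 4)"
      using \<open>0 \<le> p k\<close> norm_op_pow_sub_op_pow_le_quadratic[OF assms(1) ritt \<open>1 \<le> x\<close> \<open>x ^ 3 = real n\<close>]
      by (rule mult_left_mono[rotated])
    finally show ?thesis
      by (simp add: algebra_simps)
  qed
  have "norm (op_pow C n - op_exp (real n *\<^sub>R (C - id_blinfun))) \<le> (2 * K / x) * 1 + (2 / x ^ 4) * real n"
    by (rule norm_sums_le[OF weighted majorant bound])
  also have "(2 / x ^ 4) * real n = 2 / x"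
    using \<open>1 \<le> x\<close> by (simp flip: \<open>x ^ 3 = real n\<close> add: power3_eq_cube power4_eq_xxxx)
  finally show ?thesis
    by (simp add: x_def add_divide_distrib)
qed

text \<open>Sectoriality enters only through the hypothesis on \<open>K\<close>; beyond that, the contraction
  property is all that is used.\<close>

theorem theorem3p3:
  fixes C :: "'a::complex_hilbert \<Rightarrow>\<^sub>L 'a" and \<alpha> K :: real
  assumes "0 \<le> \<alpha>" and "\<alpha> < pi / 2"
    and "quasi_sectorial_contraction \<alpha> C"
    and "K > 0"
    and "\<forall>n::nat. norm (op_pow C n o\<^sub>L (id_blinfun - C)) \<le> K / (real n + 1)"
  shows "\<forall>n::nat. n \<ge> 1 \<longrightarrow>
           norm (op_pow C n - op_exp (real n *\<^sub>R (C - id_blinfun)))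
             \<le> (2 * K + 2) / real n powr (1 / 3)"
proof -
  have "norm C \<le> 1"
    using assms(3) by (simp add: quasi_sectorial_contraction_def)
  with assms(5) show ?thesis
    by (blast intro: norm_op_pow_sub_op_exp_le)
qed

end
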